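(* Let $\rho_n\in[\frac12,1]$, $\lambda_n\in\mathbb{R}$ and $u_n\in C^2(\overline\Omega)$ solve $-\Delta u_n+\lambda_nu_n=h_{\rho_n}(u_n)$ in $\Omega$, $\partial u_n/\partial\nu=0$ on $\partial\Omega$, $\int_\Omega u_n^2=c$. If $\lambda_n\to+\infty$, then $\|u_n\|_{L^\infty(\Omega)}\to+\infty$.
   Context: $\Omega\subset\mathbb{R}^N$ ($N\ge3$) smooth bounded domain, $c>0$; $2_*=2+\frac4N$, $2^*=\frac{2N}{N-2}$. $f$ satisfies $(f_1)$ $f\in C^1(\mathbb{R})$, $\lim_{|t|\to0}f(t)/t=0$; $(f_2)$ there exist $p\in(2_*,2^* )$, $a_0>0$ with $\lim_{|t|\to\infty}f(t)/(|t|^{p-2}t)=a_0$. Fix $R_0>0$ with $f(t)t>0$ for $|t|\ge R_0$ and a smooth cut-off $\eta$ with $\eta=1$ for $|t|\ge R_0+1$, $\eta=0$ for $|t|<R_0$, $|\eta'|\le2$; $f_1=\eta f$, $f_2=(1-\eta)f$, $h_\rho=\rho f_1+f_2$. *)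

theory Defs
  imports "HOL-Analysis.Analysis"
begin

fun Ck :: "nat \<Rightarrow> ('a::euclidean_space \<Rightarrow> real) \<Rightarrow> 'a set \<Rightarrow> bool" where
  "Ck 0 f S = continuous_on S f"
| "Ck (Suc k) f S = (continuous_on S f \<and> (\<forall>x\<in>S. f differentiable (at x)) \<and>
      (\<forall>i\<in>Basis. Ck k (\<lambda>x. frechet_derivative f (at x) i) S))"

definition smooth_on :: "('a::euclidean_space \<Rightarrow> real) \<Rightarrow> 'a set \<Rightarrow> bool" where
  "smooth_on f S \<longleftrightarrow> (\<forall>k. Ck k f S)"

definition grad :: "('a::euclidean_space \<Rightarrow> real) \<Rightarrow> 'a \<Rightarrow> 'a" where
  "grad f x = (\<Sum>i\<in>Basis. frechet_derivative f (at x) i *\<^sub>R i)"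

definition local_defining_function :: "'a::euclidean_space set \<Rightarrow> 'a \<Rightarrow> 'a set \<Rightarrow> ('a \<Rightarrow> real) \<Rightarrow> bool" where
  "local_defining_function \<Omega> x0 U \<phi> \<longleftrightarrow>
     open U \<and> x0 \<in> U \<and> smooth_on \<phi> U \<and> (\<forall>x\<in>U. grad \<phi> x \<noteq> 0) \<and>
     \<Omega> \<inter> U = {x\<in>U. \<phi> x < 0}"

definition smooth_bounded_domain :: "'a::euclidean_space set \<Rightarrow> bool" where
  "smooth_bounded_domain \<Omega> \<longleftrightarrow> open \<Omega> \<and> connected \<Omega> \<and> \<Omega> \<noteq> {} \<and> bounded \<Omega> \<and>
     (\<forall>x0\<in>frontier \<Omega>. \<exists>U \<phi>. local_defining_function \<Omega> x0 U \<phi>)"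

text \<open>Outward unit normal (independent of the chosen defining function).\<close>
definition outward_normal :: "'a::euclidean_space set \<Rightarrow> 'a \<Rightarrow> 'a" where
  "outward_normal \<Omega> x0 = (SOME n. \<exists>U \<phi>. local_defining_function \<Omega> x0 U \<phi> \<and>
       n = grad \<phi> x0 /\<^sub>R norm (grad \<phi> x0))"

definition C2_closure_with :: "'a::euclidean_space set \<Rightarrow> ('a \<Rightarrow> real) \<Rightarrow> ('a \<Rightarrow> 'a) \<Rightarrow> ('a \<Rightarrow> 'a \<Rightarrow> 'a) \<Rightarrow> bool" where
  "C2_closure_with \<Omega> u G H \<longleftrightarrow>
     (\<forall>x\<in>closure \<Omega>. (u has_derivative (\<lambda>v. G x \<bullet> v)) (at x within closure \<Omega>) \<and>
                     (G has_derivative H x) (at x within closure \<Omega>)) \<and>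
     (\<forall>v. continuous_on (closure \<Omega>) (\<lambda>x. H x v))"

definition laplacian_of :: "('a::euclidean_space \<Rightarrow> 'a \<Rightarrow> 'a) \<Rightarrow> 'a \<Rightarrow> real" where
  "laplacian_of H x = (\<Sum>i\<in>Basis. H x i \<bullet> i)"

end

theory Submission
  imports Defs
begin

(*
  Suppose not. Then along a subsequence the solutions are bounded by some M. Since h_rho is C^1
  with h_rho(0) = 0 uniformly in rho, |h_rho(t)| <= K |t| for |t| <= M, so every u_n satisfies
  |Delta u_n - lambda_n u_n| <= K |u_n|. Comparing u_n, by the maximum principle, with the barrier
  M sum_i cosh(k (x - x0)_i) / cosh(k r), where k^2 = lambda_n - K, on a cube of half-side r
  around x0 inside Omega gives |u_n(x0)| <= M N / cosh(sqrt(lambda_n - K) r) -> 0. Dominated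
  convergence then yields int u_n^2 -> 0, contradicting int u_n^2 = c > 0.
*)

lemma DERIV_pos_at_critical_point_increases:
  fixes g \<phi> :: "real \<Rightarrow> real"
  assumes "d > 0"
    and dg: "\<And>t. t \<in> {0..d} \<Longrightarrow> (g has_real_derivative \<phi> t) (at t)"
    and "\<phi> 0 = 0" and "(\<phi> has_real_derivative a) (at 0)" and "a > 0"
  obtains t where "t \<in> {0<..d}" "g 0 < g t"
proof -
  obtain e where "e > 0" and \<phi>_pos: "\<And>h. 0 < h \<Longrightarrow> h < e \<Longrightarrow> 0 < \<phi> h"
    using DERIV_pos_inc_right[OF assms(4,5)] \<open>\<phi> 0 = 0\<close> by auto
  define t where "t = min d (e / 2)"
  have "0 < t" "t \<le> d" "t < e" using \<open>d > 0\<close> \<open>e > 0\<close> by (auto simp: t_def)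
  then obtain z where "0 < z" "z < t" "g t - g 0 = t * \<phi> z"
    using MVT2[of 0 t g \<phi>] dg by auto
  moreover have "0 < \<phi> z" using \<phi>_pos \<open>0 < z\<close> \<open>z < t\<close> \<open>t < e\<close> by simp
  ultimately have "g 0 < g t" using \<open>0 < t\<close> by (metis diff_gt_0_iff_gt mult_pos_pos)
  then show ?thesis using that \<open>0 < t\<close> \<open>t \<le> d\<close> by simp
qed

lemma hessian_diagonal_nonpos_at_max:
  fixes w :: "'a::euclidean_space \<Rightarrow> real"
  assumes "open S" "y \<in> S"
    and dw: "\<And>x. x \<in> S \<Longrightarrow> (w has_derivative (\<lambda>v. G x \<bullet> v)) (at x)"
    and dG: "(G has_derivative H) (at y)"
    and max: "\<And>x. x \<in> S \<Longrightarrow> w x \<le> w y"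
  shows "H i \<bullet> i \<le> 0"
proof (rule ccontr)
  assume "\<not> H i \<bullet> i \<le> 0"
  then have Hii: "H i \<bullet> i > 0" by simp
  have "linear H" using dG by (simp add: has_derivative_linear)
  then have "i \<noteq> 0" using Hii by (auto simp: linear_0)
  have "(\<lambda>v. G y \<bullet> v) = (\<lambda>v. 0)"
    using differential_zero_maxmin[OF \<open>y \<in> S\<close> \<open>open S\<close> dw[OF \<open>y \<in> S\<close>]] max by blast
  then have "G y = 0" by (metis inner_eq_zero_iff)
  obtain e where "e > 0" "ball y e \<subseteq> S" using assms(1,2) open_contains_ball by blast
  define d where "d = e / (2 * norm i)"
  have "d > 0" using \<open>e > 0\<close> \<open>i \<noteq> 0\<close> by (simp add: d_def)
  have segment: "y + t *\<^sub>R i \<in> S" if "t \<in> {0..d}" for t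
  proof -
    have "norm (t *\<^sub>R i) \<le> d * norm i" using that by (simp add: mult_right_mono)
    also have "\<dots> < e" using \<open>e > 0\<close> \<open>i \<noteq> 0\<close> by (simp add: d_def)
    finally show ?thesis using \<open>ball y e \<subseteq> S\<close> by (auto simp: dist_norm)
  qed
  have line: "((\<lambda>t. y + t *\<^sub>R i) has_derivative (\<lambda>s. s *\<^sub>R i)) (at t)" for t
    by (auto intro!: derivative_eq_intros)
  define \<phi> where "\<phi> t = G (y + t *\<^sub>R i) \<bullet> i" for t
  have "((\<lambda>t. w (y + t *\<^sub>R i)) has_real_derivative \<phi> t) (at t)" if "t \<in> {0..d}" for t
    using has_derivative_compose[OF line dw[OF segment[OF that]]]
    by (simp add: has_field_derivative_def \<phi>_def o_def mult.commute[of _ "G _ \<bullet> i"])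
  moreover have "(\<phi> has_real_derivative H i \<bullet> i) (at 0)"
  proof -
    have "(\<phi> has_derivative (\<lambda>s. H (s *\<^sub>R i) \<bullet> i)) (at 0)"
      using has_derivative_compose[OF line, of G H] dG
      unfolding \<phi>_def by (auto simp: o_def intro!: derivative_eq_intros)
    then show ?thesis
      using \<open>linear H\<close> by (simp add: has_field_derivative_def linear_scale mult.commute[of _ "H i \<bullet> i"])
  qed
  ultimately obtain t where "t \<in> {0<..d}" "w y < w (y + t *\<^sub>R i)"
    using DERIV_pos_at_critical_point_increases[OF \<open>d > 0\<close>, of "\<lambda>t. w (y + t *\<^sub>R i)" \<phi>]
      Hii \<open>G y = 0\<close>
    by (auto simp: \<phi>_def)
  then show False using max[OF segment, of t] by simp
qed

lemma maximum_principle: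
  fixes w :: "'a::euclidean_space \<Rightarrow> real"
  assumes "compact K" "continuous_on K w" "x \<in> K"
    and dw: "\<And>y. y \<in> interior K \<Longrightarrow> (w has_derivative (\<lambda>v. G y \<bullet> v)) (at y)"
    and dG: "\<And>y. y \<in> interior K \<Longrightarrow> (G has_derivative H y) (at y)"
    and boundary: "\<And>y. y \<in> frontier K \<Longrightarrow> w y \<le> 0"
    and lap_pos: "\<And>y. y \<in> interior K \<Longrightarrow> w y > 0 \<Longrightarrow> laplacian_of H y > 0"
  shows "w x \<le> 0"
proof (rule ccontr)
  assume "\<not> w x \<le> 0"
  obtain y where "y \<in> K" and max: "\<And>z. z \<in> K \<Longrightarrow> w z \<le> w y"
    using continuous_attains_sup[OF assms(1) _ assms(2)] \<open>x \<in> K\<close> by blast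
  have "w y > 0" using max[OF \<open>x \<in> K\<close>] \<open>\<not> w x \<le> 0\<close> by simp
  then have y: "y \<in> interior K"
    using boundary \<open>y \<in> K\<close> compact_imp_closed[OF \<open>compact K\<close>]
    by (force simp: frontier_def)
  have "H y i \<bullet> i \<le> 0" for i
    by (rule hessian_diagonal_nonpos_at_max[OF open_interior y dw dG[OF y]])
       (use max interior_subset in auto)
  then have "laplacian_of H y \<le> 0" by (simp add: laplacian_of_def sum_nonpos)
  then show False using lap_pos[OF y \<open>w y > 0\<close>] by simp
qed

lemma mem_cbox_cube:
  "y \<in> cbox (x0 - r *\<^sub>R One) (x0 + r *\<^sub>R One) \<longleftrightarrow> (\<forall>i\<in>Basis. \<bar>(y - x0) \<bullet> i\<bar> \<le> r)"
  by (auto simp: mem_box inner_simps abs_le_iff)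

lemma mem_box_cube:
  "y \<in> box (x0 - r *\<^sub>R One) (x0 + r *\<^sub>R One) \<longleftrightarrow> (\<forall>i\<in>Basis. \<bar>(y - x0) \<bullet> i\<bar> < r)"
  by (auto simp: mem_box inner_simps abs_less_iff)

lemma open_contains_cube:
  fixes x :: "'a::euclidean_space"
  assumes "open S" "x \<in> S"
  obtains r where "r > 0" "cbox (x - r *\<^sub>R One) (x + r *\<^sub>R One) \<subseteq> S"
proof -
  obtain e where "e > 0" "ball x e \<subseteq> S" using assms open_contains_ball by blast
  define r where "r = e / (2 * DIM('a))"
  have "cbox (x - r *\<^sub>R One) (x + r *\<^sub>R One) \<subseteq> ball x e"
  proof
    fix y assume "y \<in> cbox (x - r *\<^sub>R One) (x + r *\<^sub>R One)"
    then have "norm (y - x) \<le> (\<Sum>i\<in>(Basis::'a set). r)"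
      unfolding mem_cbox_cube by (intro order.trans[OF norm_le_l1 sum_mono]) auto
    also have "\<dots> < e" using \<open>e > 0\<close> by (simp add: r_def)
    finally show "y \<in> ball x e" by (simp add: dist_norm norm_minus_commute)
  qed
  then show ?thesis using that[of r] \<open>e > 0\<close> \<open>ball x e \<subseteq> S\<close> by (simp add: r_def)
qed

definition cosh_barrier :: "real \<Rightarrow> 'a::euclidean_space \<Rightarrow> 'a \<Rightarrow> real" where
  "cosh_barrier k x0 y = (\<Sum>i\<in>Basis. cosh (k * ((y - x0) \<bullet> i)))"

lemma cosh_barrier_laplacian:
  fixes x0 :: "'a::euclidean_space"
  obtains G H where
    "\<And>y. (cosh_barrier k x0 has_derivative (\<lambda>v. G y \<bullet> v)) (at y)"
    "\<And>y. (G has_derivative H y) (at y)"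
    "\<And>y. laplacian_of H y = k\<^sup>2 * cosh_barrier k x0 y"
proof
  let ?G = "\<lambda>y. \<Sum>i\<in>Basis. (k * sinh (k * ((y - x0) \<bullet> i))) *\<^sub>R i"
  let ?H = "\<lambda>y v. \<Sum>i\<in>Basis. (k\<^sup>2 * cosh (k * ((y - x0) \<bullet> i)) * (v \<bullet> i)) *\<^sub>R i"
  fix y
  have coord: "((\<lambda>x. k * ((x - x0) \<bullet> i)) has_derivative (\<lambda>v. k * (v \<bullet> i))) (at y)" for i
    by (auto intro!: derivative_eq_intros)
  have "(cosh_barrier k x0 has_derivative
          (\<lambda>v. \<Sum>i\<in>Basis. k * (v \<bullet> i) * sinh (k * ((y - x0) \<bullet> i)))) (at y)"
    unfolding cosh_barrier_def using coord
    by (auto intro!: derivative_eq_intros has_field_derivative_cosh[THEN DERIV_compose_FDERIV])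
  moreover have "(\<lambda>v. \<Sum>i\<in>Basis. k * (v \<bullet> i) * sinh (k * ((y - x0) \<bullet> i))) = (\<lambda>v. ?G y \<bullet> v)"
    by (simp add: fun_eq_iff inner_sum_left inner_sum_right inner_commute mult_ac)
  ultimately show "(cosh_barrier k x0 has_derivative (\<lambda>v. ?G y \<bullet> v)) (at y)" by simp
  have "(?G has_derivative
          (\<lambda>v. \<Sum>i\<in>Basis. (k * (k * (v \<bullet> i) * cosh (k * ((y - x0) \<bullet> i)))) *\<^sub>R i)) (at y)"
    using coord
    by (auto intro!: derivative_eq_intros has_field_derivative_sinh[THEN DERIV_compose_FDERIV])
  then show "(?G has_derivative ?H y) (at y)"
    by (simp add: power2_eq_square mult_ac)
  show "laplacian_of ?H y = k\<^sup>2 * cosh_barrier k x0 y"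
    by (simp add: laplacian_of_def cosh_barrier_def sum_distrib_left inner_Basis mult_ac)
qed

lemma cosh_barrier_nonneg: "0 \<le> cosh_barrier k x0 y"
  unfolding cosh_barrier_def by (auto intro: sum_nonneg order.trans[OF zero_le_one cosh_real_ge_1])

lemma cosh_barrier_center: "cosh_barrier k x0 x0 = DIM('a)"
  for x0 :: "'a::euclidean_space"
  by (simp add: cosh_barrier_def)

lemma cosh_barrier_on_cube_frontier:
  assumes "y \<in> frontier (cbox (x0 - r *\<^sub>R One) (x0 + r *\<^sub>R One))"
  shows "cosh (k * r) \<le> cosh_barrier k x0 y"
proof -
  obtain j where "j \<in> Basis" "\<bar>(y - x0) \<bullet> j\<bar> = r"
    using assms unfolding frontier_cbox Diff_iff mem_cbox_cube mem_box_cube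
    by (meson antisym not_less)
  then have "cosh (k * r) = cosh (k * ((y - x0) \<bullet> j))"
    by (metis abs_if cosh_minus mult_minus_right)
  also have "\<dots> \<le> cosh_barrier k x0 y"
    unfolding cosh_barrier_def using \<open>j \<in> Basis\<close>
    by (intro member_le_sum) (auto intro: order.trans[OF zero_le_one cosh_real_ge_1])
  finally show ?thesis .
qed

lemma subsolution_bound_in_cube:
  fixes z :: "'a::euclidean_space \<Rightarrow> real"
  assumes "k > 0" "r \<ge> 0" "Z \<ge> 0"
    and cube: "cbox (x0 - r *\<^sub>R One) (x0 + r *\<^sub>R One) \<subseteq> S"
    and dz: "\<And>y. y \<in> S \<Longrightarrow> (z has_derivative (\<lambda>v. G y \<bullet> v)) (at y)"
    and dG: "\<And>y. y \<in> S \<Longrightarrow> (G has_derivative H y) (at y)"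
    and le_Z: "\<And>y. y \<in> S \<Longrightarrow> z y \<le> Z"
    and sub: "\<And>y. y \<in> S \<Longrightarrow> z y > 0 \<Longrightarrow> k\<^sup>2 * z y \<le> laplacian_of H y"
  shows "z x0 \<le> Z * DIM('a) / cosh (k * r)"
proof -
  let ?Q = "cbox (x0 - r *\<^sub>R One) (x0 + r *\<^sub>R One)"
  define C where "C = Z / cosh (k * r)"
  have "C \<ge> 0" using \<open>Z \<ge> 0\<close> by (simp add: C_def)
  obtain G\<psi> H\<psi> where d\<psi>: "\<And>y. (cosh_barrier k x0 has_derivative (\<lambda>v. G\<psi> y \<bullet> v)) (at y)"
      and dG\<psi>: "\<And>y. (G\<psi> has_derivative H\<psi> y) (at y)"
      and lap\<psi>: "\<And>y. laplacian_of H\<psi> y = k\<^sup>2 * cosh_barrier k x0 y"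
    using cosh_barrier_laplacian[of k x0] by blast
  define w where "w y = z y - C * cosh_barrier k x0 y" for y
  have dw: "(w has_derivative (\<lambda>v. (G y - C *\<^sub>R G\<psi> y) \<bullet> v)) (at y)" if "y \<in> S" for y
    unfolding w_def using dz[OF that] d\<psi>[of y]
    by (auto intro!: derivative_eq_intros simp: inner_diff_left)
  have dGw: "((\<lambda>y. G y - C *\<^sub>R G\<psi> y) has_derivative (\<lambda>v. H y v - C *\<^sub>R H\<psi> y v)) (at y)"
    if "y \<in> S" for y
    using dG[OF that] dG\<psi>[of y] by (auto intro!: derivative_eq_intros)
  have QS: "interior ?Q \<subseteq> S" using cube interior_subset by blast
  have "w x0 \<le> 0"
  proof (rule maximum_principle[OF compact_cbox, where w = w])
    show "continuous_on ?Q w"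
      using cube dw by (intro continuous_at_imp_continuous_on ballI has_derivative_continuous) auto
    show "x0 \<in> ?Q" using \<open>r \<ge> 0\<close> by (simp add: mem_cbox_cube)
    show "(w has_derivative (\<lambda>v. (G y - C *\<^sub>R G\<psi> y) \<bullet> v)) (at y)" if "y \<in> interior ?Q" for y
      using dw QS that by blast
    show "((\<lambda>y. G y - C *\<^sub>R G\<psi> y) has_derivative (\<lambda>v. H y v - C *\<^sub>R H\<psi> y v)) (at y)"
      if "y \<in> interior ?Q" for y
      using dGw QS that by blast
    show "w y \<le> 0" if "y \<in> frontier ?Q" for y
    proof -
      have "Z \<le> C * cosh_barrier k x0 y"
        using mult_left_mono[OF cosh_barrier_on_cube_frontier[OF that, of k] \<open>C \<ge> 0\<close>]
        by (simp add: C_def cosh_real_pos[THEN less_imp_neq, symmetric])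
      moreover have "z y \<le> Z" using le_Z cube that frontier_subset_closed[OF closed_cbox] by blast
      ultimately show ?thesis by (simp add: w_def)
    qed
    show "laplacian_of (\<lambda>y v. H y v - C *\<^sub>R H\<psi> y v) y > 0" if "y \<in> interior ?Q" "w y > 0" for y
    proof -
      have "y \<in> S" using that(1) QS by blast
      have "C * cosh_barrier k x0 y < z y" using that(2) by (simp add: w_def)
      moreover have "0 \<le> C * cosh_barrier k x0 y"
        using \<open>C \<ge> 0\<close> cosh_barrier_nonneg by (rule mult_nonneg_nonneg)
      ultimately have "k\<^sup>2 * (C * cosh_barrier k x0 y) < laplacian_of H y"
        using sub[OF \<open>y \<in> S\<close>] \<open>k > 0\<close> by (smt (verit) mult_strict_left_mono zero_less_power)
      moreover have "laplacian_of (\<lambda>y v. H y v - C *\<^sub>R H\<psi> y v) y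
          = laplacian_of H y - C * laplacian_of H\<psi> y"
        by (simp add: laplacian_of_def inner_diff_left sum_subtractf sum_distrib_left)
      ultimately show ?thesis using lap\<psi>[of y] by (simp add: mult_ac)
    qed
  qed
  then show ?thesis by (simp add: w_def C_def cosh_barrier_center)
qed

lemma screened_solution_bound_in_cube:
  fixes v :: "'a::euclidean_space \<Rightarrow> real"
  assumes "k > 0" "r \<ge> 0"
    and cube: "cbox (x0 - r *\<^sub>R One) (x0 + r *\<^sub>R One) \<subseteq> S"
    and dv: "\<And>y. y \<in> S \<Longrightarrow> (v has_derivative (\<lambda>w. G y \<bullet> w)) (at y)"
    and dG: "\<And>y. y \<in> S \<Longrightarrow> (G has_derivative H y) (at y)"
    and bound: "\<And>y. y \<in> S \<Longrightarrow> \<bar>v y\<bar> \<le> M"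
    and screened: "\<And>y. y \<in> S \<Longrightarrow> k\<^sup>2 * (v y)\<^sup>2 \<le> v y * laplacian_of H y"
  shows "\<bar>v x0\<bar> \<le> M * DIM('a) / cosh (k * r)"
proof -
  have "x0 \<in> S" using cube \<open>r \<ge> 0\<close> by (auto simp: mem_cbox_cube)
  then have "M \<ge> 0" using bound[of x0] by simp
  have "v x0 \<le> M * DIM('a) / cosh (k * r)"
  proof (rule subsolution_bound_in_cube[OF \<open>k > 0\<close> \<open>r \<ge> 0\<close> \<open>M \<ge> 0\<close> cube dv dG])
    show "v y \<le> M" if "y \<in> S" for y using bound[OF that] by simp
    show "k\<^sup>2 * v y \<le> laplacian_of H y" if "y \<in> S" "v y > 0" for y
      using screened[OF that(1)] that(2) by (simp add: power2_eq_square mult_ac)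
  qed
  moreover have "- v x0 \<le> M * DIM('a) / cosh (k * r)"
  proof (rule subsolution_bound_in_cube[OF \<open>k > 0\<close> \<open>r \<ge> 0\<close> \<open>M \<ge> 0\<close> cube,
        where z = "\<lambda>y. - v y" and G = "\<lambda>y. - G y" and H = "\<lambda>y w. - H y w"])
    show "((\<lambda>y. - v y) has_derivative (\<lambda>w. - G y \<bullet> w)) (at y)" if "y \<in> S" for y
      using dv[OF that] by (auto intro!: derivative_eq_intros)
    show "((\<lambda>y. - G y) has_derivative (\<lambda>w. - H y w)) (at y)" if "y \<in> S" for y
      using dG[OF that] by (auto intro!: derivative_eq_intros)
    show "- v y \<le> M" if "y \<in> S" for y using bound[OF that] by simp
    show "k\<^sup>2 * - v y \<le> laplacian_of (\<lambda>y w. - H y w) y" if "y \<in> S" "- v y > 0" for y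
      using screened[OF that(1)] that(2)
      by (simp add: laplacian_of_def sum_negf power2_eq_square mult_ac)
  qed
  ultimately show ?thesis by simp
qed

lemma screened_solutions_tendsto_zero:
  fixes v :: "nat \<Rightarrow> 'a::euclidean_space \<Rightarrow> real"
  assumes "open S" "x \<in> S"
    and dv: "\<And>n y. y \<in> S \<Longrightarrow> (v n has_derivative (\<lambda>w. G n y \<bullet> w)) (at y)"
    and dG: "\<And>n y. y \<in> S \<Longrightarrow> (G n has_derivative H n y) (at y)"
    and bound: "\<And>n y. y \<in> S \<Longrightarrow> \<bar>v n y\<bar> \<le> M"
    and screened: "\<And>n y. y \<in> S \<Longrightarrow> \<bar>laplacian_of (H n) y - lam n * v n y\<bar> \<le> K * \<bar>v n y\<bar>"
    and lam: "filterlim lam at_top sequentially"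
  shows "(\<lambda>n. v n x) \<longlonglongrightarrow> 0"
proof -
  obtain r where "r > 0" and cube: "cbox (x - r *\<^sub>R One) (x + r *\<^sub>R One) \<subseteq> S"
    using open_contains_cube[OF assms(1,2)] .
  define B where "B n = M * DIM('a) / cosh (sqrt (lam n - K) * r)" for n
  have "\<forall>\<^sub>F n in sequentially. K < lam n"
    using lam by (simp add: filterlim_at_top_dense)
  then have "\<forall>\<^sub>F n in sequentially. norm (v n x) \<le> B n"
  proof eventually_elim
    case (elim n)
    have "(sqrt (lam n - K))\<^sup>2 * (v n y)\<^sup>2 \<le> v n y * laplacian_of (H n) y" if "y \<in> S" for y
    proof -
      have "\<bar>v n y * (laplacian_of (H n) y - lam n * v n y)\<bar> \<le> \<bar>v n y\<bar> * (K * \<bar>v n y\<bar>)"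
        unfolding abs_mult using screened[OF that] by (rule mult_left_mono) simp
      then have "v n y * (laplacian_of (H n) y - lam n * v n y) \<ge> - (K * (v n y)\<^sup>2)"
        by (simp add: abs_le_iff power2_eq_square abs_mult_self mult_ac)
      then show ?thesis using elim by (simp add: algebra_simps power2_eq_square)
    qed
    then show ?case
      using screened_solution_bound_in_cube[OF _ _ cube dv dG bound] elim \<open>r > 0\<close>
      by (simp add: B_def)
  qed
  moreover have "B \<longlonglongrightarrow> 0"
  proof -
    have "filterlim (\<lambda>n. lam n - K) at_top sequentially"
      using filterlim_tendsto_add_at_top[OF tendsto_const lam, of "- K"] by simp
    then have "filterlim (\<lambda>n. sqrt (lam n - K) * r) at_top sequentially"
      using filterlim_tendsto_pos_mult_at_top[OF tendsto_const \<open>r > 0\<close> filterlim_compose[OF sqrt_at_top]]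
      by (simp add: mult.commute)
    then have "filterlim (\<lambda>n. cosh (sqrt (lam n - K) * r)) at_top sequentially"
      using filterlim_compose[OF cosh_real_at_top] by blast
    then show ?thesis
      unfolding B_def by (intro tendsto_divide_0[OF tendsto_const] filterlim_at_top_imp_at_infinity)
  qed
  ultimately show ?thesis by (rule Lim_null_comparison)
qed

lemma integral_square_tendsto_0:
  fixes v :: "nat \<Rightarrow> 'a::euclidean_space \<Rightarrow> real"
  assumes "S \<in> lmeasurable"
    and "\<And>n. (\<lambda>x. (v n x)\<^sup>2) integrable_on S"
    and bound: "\<And>n x. x \<in> S \<Longrightarrow> \<bar>v n x\<bar> \<le> M"
    and lim: "\<And>x. x \<in> S \<Longrightarrow> (\<lambda>n. v n x) \<longlonglongrightarrow> 0"
  shows "(\<lambda>n. integral S (\<lambda>x. (v n x)\<^sup>2)) \<longlonglongrightarrow> 0"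
proof -
  have "(\<lambda>n. integral S (\<lambda>x. (v n x)\<^sup>2)) \<longlonglongrightarrow> integral S (\<lambda>x. 0\<^sup>2)"
  proof (rule dominated_convergence(2)[OF assms(2) integrable_on_const[OF assms(1)]])
    show "norm ((v n x)\<^sup>2) \<le> M\<^sup>2" if "x \<in> S" for n x
      using power_mono[OF bound[OF that, of n] abs_ge_zero, of 2] by simp
    show "(\<lambda>n. (v n x)\<^sup>2) \<longlonglongrightarrow> 0\<^sup>2" if "x \<in> S" for x
      using lim[OF that] by (rule tendsto_power)
  qed
  then show ?thesis by simp
qed

lemma zero_if_tendsto_divide_ident_zero:
  fixes f :: "real \<Rightarrow> real"
  assumes "isCont f 0" and "((\<lambda>t. f t / t) \<longlongrightarrow> 0) (at 0)"
  shows "f 0 = 0"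
proof -
  have "((\<lambda>t. t * (f t / t)) \<longlongrightarrow> 0 * 0) (at 0)"
    by (intro tendsto_mult assms(2) tendsto_ident_at)
  moreover have "\<forall>\<^sub>F t in at 0. t * (f t / t) = f t"
    by (auto simp: eventually_at_filter)
  ultimately have "(f \<longlongrightarrow> 0) (at 0)" by (simp add: tendsto_cong)
  then show ?thesis using assms(1) by (simp add: isCont_def LIM_unique)
qed

lemma linear_bound_of_C1_vanishing_at_0:
  fixes f f' :: "real \<Rightarrow> real"
  assumes df: "\<And>t. (f has_real_derivative f' t) (at t)"
    and "continuous_on UNIV f'" and "f 0 = 0"
  obtains L where "\<And>t. \<bar>t\<bar> \<le> M \<Longrightarrow> \<bar>f t\<bar> \<le> L * \<bar>t\<bar>"
proof -
  obtain L where L: "\<And>t. t \<in> {-M..M} \<Longrightarrow> norm (f' t) \<le> L"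
    using compact_imp_bounded[OF compact_continuous_image[OF
          continuous_on_subset[OF \<open>continuous_on UNIV f'\<close>] compact_Icc]]
    unfolding bounded_iff by blast
  have "\<bar>f t\<bar> \<le> L * \<bar>t\<bar>" if "\<bar>t\<bar> \<le> M" for t
  proof -
    have "norm (f t - f 0) \<le> L * norm (t - 0)"
      by (rule field_differentiable_bound[where S = "{-M..M}" and f' = f'])
         (use that df L in \<open>auto simp: has_field_derivative_at_within\<close>)
    then show ?thesis using \<open>f 0 = 0\<close> by simp
  qed
  then show ?thesis using that by blast
qed

lemma cutoff_nonlinearity_linear_bound:
  fixes f f' \<eta> :: "real \<Rightarrow> real"
  assumes df: "\<And>t. (f has_real_derivative f' t) (at t)" "continuous_on UNIV f'"
    and f0: "((\<lambda>t. f t / t) \<longlongrightarrow> 0) (at 0)"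
    and "continuous_on UNIV \<eta>"
  obtains K where "\<And>r t. r \<in> {0..1} \<Longrightarrow> \<bar>t\<bar> \<le> M \<Longrightarrow>
      \<bar>r * (\<eta> t * f t) + (1 - \<eta> t) * f t\<bar> \<le> K * \<bar>t\<bar>"
proof -
  have "f 0 = 0"
    using zero_if_tendsto_divide_ident_zero[OF DERIV_isCont[OF df(1)] f0] .
  then obtain L where L: "\<And>t. \<bar>t\<bar> \<le> M \<Longrightarrow> \<bar>f t\<bar> \<le> L * \<bar>t\<bar>"
    using linear_bound_of_C1_vanishing_at_0[OF df] by blast
  obtain B where B: "\<And>t. t \<in> {-M..M} \<Longrightarrow> norm (\<eta> t) \<le> B"
    using compact_imp_bounded[OF compact_continuous_image[OF
          continuous_on_subset[OF \<open>continuous_on UNIV \<eta>\<close>] compact_Icc]]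
    unfolding bounded_iff by blast
  have "\<bar>r * (\<eta> t * f t) + (1 - \<eta> t) * f t\<bar> \<le> ((1 + B) * L) * \<bar>t\<bar>"
    if "r \<in> {0..1}" "\<bar>t\<bar> \<le> M" for r t
  proof -
    have "(1 - r) * \<bar>\<eta> t\<bar> \<le> \<bar>\<eta> t\<bar>" using that by (intro mult_left_le_one_le) auto
    then have "\<bar>1 - (1 - r) * \<eta> t\<bar> \<le> 1 + B"
      using B[of t] that(2) abs_triangle_ineq4[of 1 "(1 - r) * \<eta> t"] \<open>r \<in> {0..1}\<close>
      by (auto simp: abs_mult abs_le_iff)
    then have "\<bar>1 - (1 - r) * \<eta> t\<bar> * \<bar>f t\<bar> \<le> (1 + B) * (L * \<bar>t\<bar>)"
      using L[OF that(2)] by (intro mult_mono) auto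
    then show ?thesis by (simp add: algebra_simps abs_mult[symmetric])
  qed
  then show ?thesis using that by blast
qed

lemma not_filterlim_at_top_bounded_subseq:
  fixes X :: "nat \<Rightarrow> 'a::linorder"
  assumes "\<not> filterlim X at_top sequentially"
  obtains s :: "nat \<Rightarrow> nat" and Z where "strict_mono s" "\<And>k. X (s k) < Z"
proof -
  obtain Z where "\<not> (\<forall>\<^sub>F n in sequentially. Z \<le> X n)"
    using assms unfolding filterlim_at_top by blast
  then have "\<forall>N. \<exists>n\<ge>N. X n < Z"
    by (simp add: eventually_sequentially not_le)
  then have "infinite {n. X n < Z}"
    by (simp add: infinite_nat_iff_unbounded_le)
  then show ?thesis
    using infinite_enumerate that by blast
qed

lemma abs_le_SUP_abs:
  fixes g :: "'a::heine_borel \<Rightarrow> real"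
  assumes "bounded S" "continuous_on (closure S) g" "x \<in> S"
  shows "\<bar>g x\<bar> \<le> (SUP y\<in>S. \<bar>g y\<bar>)"
proof (rule cSUP_upper[where f = "\<lambda>y. \<bar>g y\<bar>", OF \<open>x \<in> S\<close>])
  have "compact ((\<lambda>y. \<bar>g y\<bar>) ` closure S)"
    using assms(1,2) by (intro compact_continuous_image continuous_on_rabs) (auto simp: compact_closure)
  then have "bdd_above ((\<lambda>y. \<bar>g y\<bar>) ` closure S)"
    by (intro bounded_imp_bdd_above compact_imp_bounded)
  then show "bdd_above ((\<lambda>y. \<bar>g y\<bar>) ` S)"
    by (rule bdd_above_mono[OF _ image_mono[OF closure_subset]])
qed

lemma C2_closure_with_continuous:
  "C2_closure_with \<Omega> u G H \<Longrightarrow> continuous_on (closure \<Omega>) u"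
  unfolding C2_closure_with_def
  by (meson continuous_on_eq_continuous_within has_derivative_continuous)

lemma C2_closure_with_interior:
  assumes "C2_closure_with \<Omega> u G H" "open \<Omega>" "y \<in> \<Omega>"
  shows "(u has_derivative (\<lambda>v. G y \<bullet> v)) (at y)" "(G has_derivative H y) (at y)"
proof -
  have within: "(g has_derivative g') (at y)" if "(g has_derivative g') (at y within closure \<Omega>)"
    for g :: "'a \<Rightarrow> 'b::real_normed_vector" and g'
    using has_derivative_subset[OF that closure_subset] at_within_open[OF assms(3,2)] by simp
  show "(u has_derivative (\<lambda>v. G y \<bullet> v)) (at y)" "(G has_derivative H y) (at y)"
    using assms(1,3) closure_subset unfolding C2_closure_with_def
    by (auto intro!: within)
qed

theorem lemma4p2:
  fixes \<Omega> :: "'a::euclidean_space set"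
    and c a0 p R0 :: real
    and f f' \<eta> :: "real \<Rightarrow> real"
    and \<rho> lam :: "nat \<Rightarrow> real"
    and u :: "nat \<Rightarrow> 'a \<Rightarrow> real"
  assumes dim: "DIM('a) \<ge> 3"
    and dom: "smooth_bounded_domain \<Omega>"
    and c_pos: "c > 0"
    and f_C1: "\<forall>t. (f has_real_derivative f' t) (at t)" "continuous_on UNIV f'"
    and f_1: "((\<lambda>t. f t / t) \<longlongrightarrow> 0) (at 0)"
    and p_range: "2 + 4 / real DIM('a) < p" "p < 2 * real DIM('a) / (real DIM('a) - 2)"
    and a0_pos: "a0 > 0"
    and f_2: "((\<lambda>t. f t / (\<bar>t\<bar> powr (p - 2) * t)) \<longlongrightarrow> a0) at_infinity"
    and R0: "R0 > 0" "\<forall>t. \<bar>t\<bar> \<ge> R0 \<longrightarrow> f t * t > 0"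
    and eta_smooth: "smooth_on \<eta> UNIV"
    and eta_1: "\<forall>t. \<bar>t\<bar> \<ge> R0 + 1 \<longrightarrow> \<eta> t = 1"
    and eta_0: "\<forall>t. \<bar>t\<bar> < R0 \<longrightarrow> \<eta> t = 0"
    and eta_deriv: "\<forall>t. \<bar>deriv \<eta> t\<bar> \<le> 2"
    and rho: "\<forall>n. 1/2 \<le> \<rho> n \<and> \<rho> n \<le> 1"
    and sol: "\<forall>n. \<exists>G H. C2_closure_with \<Omega> (u n) G H \<and>
               (\<forall>x\<in>\<Omega>. - laplacian_of H x + lam n * u n x
                    = \<rho> n * (\<eta> (u n x) * f (u n x)) + (1 - \<eta> (u n x)) * f (u n x)) \<and>
               (\<forall>x\<in>frontier \<Omega>. G x \<bullet> outward_normal \<Omega> x = 0)"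
    and mass: "\<forall>n. integral \<Omega> (\<lambda>x. (u n x)\<^sup>2) = c"
    and lam_inf: "filterlim lam at_top sequentially"
  shows "filterlim (\<lambda>n. SUP x\<in>\<Omega>. \<bar>u n x\<bar>) at_top sequentially"
proof (rule ccontr)
  assume "\<not> ?thesis"
  then obtain s :: "nat \<Rightarrow> nat" and Z
    where "strict_mono s" and sup_bound: "\<And>k. (SUP x\<in>\<Omega>. \<bar>u (s k) x\<bar>) < Z"
    using not_filterlim_at_top_bounded_subseq[of "\<lambda>n. SUP x\<in>\<Omega>. \<bar>u n x\<bar>"] by auto
  have "open \<Omega>" "bounded \<Omega>" using dom by (auto simp: smooth_bounded_domain_def)
  obtain G H where C2: "\<And>n. C2_closure_with \<Omega> (u n) (G n) (H n)"
    and pde: "\<And>n x. x \<in> \<Omega> \<Longrightarrow> - laplacian_of (H n) x + lam n * u n x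
                    = \<rho> n * (\<eta> (u n x) * f (u n x)) + (1 - \<eta> (u n x)) * f (u n x)"
    using sol by metis
  have bound: "\<bar>u (s k) x\<bar> \<le> Z" if "x \<in> \<Omega>" for k x
    using abs_le_SUP_abs[OF \<open>bounded \<Omega>\<close> C2_closure_with_continuous[OF C2[of "s k"]] that]
      sup_bound[of k]
    by linarith
  obtain K where K: "\<And>r t. r \<in> {0..1} \<Longrightarrow> \<bar>t\<bar> \<le> Z \<Longrightarrow>
      \<bar>r * (\<eta> t * f t) + (1 - \<eta> t) * f t\<bar> \<le> K * \<bar>t\<bar>"
    using cutoff_nonlinearity_linear_bound[OF f_C1(1)[rule_format] f_C1(2) f_1] eta_smooth
    unfolding smooth_on_def by (metis Ck.simps(1))
  have pointwise: "(\<lambda>k. u (s k) x) \<longlonglongrightarrow> 0" if "x \<in> \<Omega>" for x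
  proof (rule screened_solutions_tendsto_zero[OF \<open>open \<Omega>\<close> that])
    show "\<bar>laplacian_of (H (s k)) y - lam (s k) * u (s k) y\<bar> \<le> K * \<bar>u (s k) y\<bar>"
      if "y \<in> \<Omega>" for k y
    proof -
      have "\<rho> (s k) \<in> {0..1}" using rho[rule_format, of "s k"] by simp
      from K[OF this bound[OF that, of k]] show ?thesis
        using pde[OF that, of "s k"] by (simp add: abs_minus_commute)
    qed
    show "filterlim (\<lambda>k. lam (s k)) at_top sequentially"
      using filterlim_compose[OF lam_inf filterlim_subseq[OF \<open>strict_mono s\<close>]] .
  qed (use C2_closure_with_interior[OF C2 \<open>open \<Omega>\<close>] bound in auto)
  have "(\<lambda>k. integral \<Omega> (\<lambda>x. (u (s k) x)\<^sup>2)) \<longlonglongrightarrow> 0"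
  proof (rule integral_square_tendsto_0[where v = "\<lambda>k. u (s k)",
        OF lmeasurable_open[OF \<open>bounded \<Omega>\<close> \<open>open \<Omega>\<close>] _ bound pointwise])
    \<comment> \<open>a non-integrable function has integral 0, but the mass is \<open>c > 0\<close>\<close>
    show "(\<lambda>x. (u (s k) x)\<^sup>2) integrable_on \<Omega>" for k
      using mass c_pos not_integrable_integral by fastforce
  qed
  then show False using mass c_pos by (simp add: LIMSEQ_const_iff)
qed

end
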